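(* Fix $\lambda\in[0,1)$ and $p\in[0,1]$. Let $\mathbf{v}^1(\cdot)$ and $\mathbf{v}^2(\cdot)$ be solutions to the fluid model (with initial conditions in $\overline{\mathcal{V}}^\infty$), and let $\mathbf{s}^k_i(t)=\mathbf{v}^k_i(t)-\mathbf{v}^k_{i+1}(t)$ for $i\ge0$, $k=1,2$. If $\mathbf{s}^1_i(0)\ge\mathbf{s}^2_i(0)$ for all $i\ge0$, then $\mathbf{s}^1_i(t)\ge\mathbf{s}^2_i(t)$ for all $i\ge0$ and all $t\ge0$.
   Context: $\mathcal{S}=\{\mathbf{s}\in[0,1]^{\mathbb{Z}_+}:1=\mathbf{s}_0\ge\mathbf{s}_1\ge\cdots\ge0\}$, $\overline{\mathcal{S}}^\infty=\{\mathbf{s}\in\mathcal{S}:\sum_{i\ge1}\mathbf{s}_i<\infty\}$, $\overline{\mathcal{V}}^\infty=\{\mathbf{v}:\mathbf{v}_i=\sum_{j\ge i}\mathbf{s}_j\ \forall i,\text{ for some }\mathbf{s}\in\overline{\mathcal{S}}^\infty\}$. $g_i(\mathbf{v})=p$ if $\mathbf{v}_i>0$, $=\min\{\lambda\mathbf{v}_{i-1},p\}$ if $\mathbf{v}_i=0<\mathbf{v}_{i-1}$, $=0$ if $\mathbf{v}_i=\mathbf{v}_{i-1}=0$. A solution to the fluid model with initial condition $\mathbf{v}^0$ is $\mathbf{v}:[0,\infty)\to\overline{\mathcal{V}}^\infty$ with (0) all coordinates $L$-Lipschitz for a common $L$; (1) $\mathbf{v}(0)=\mathbf{v}^0$; (2)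 for all $t$, $\mathbf{v}_0-\mathbf{v}_1=1$ and $1\ge\mathbf{v}_i-\mathbf{v}_{i+1}\ge\mathbf{v}_{i+1}-\mathbf{v}_{i+2}\ge0$, $i\ge0$; (3) for a.e. $t$ and all $i\ge1$, $\dot{\mathbf{v}}_i=\lambda(\mathbf{v}_{i-1}-\mathbf{v}_i)-(1-p)(\mathbf{v}_i-\mathbf{v}_{i+1})-g_i(\mathbf{v})$. *)

theory Defs
  imports "HOL-Analysis.Analysis"
begin

definition S_set :: "(nat \<Rightarrow> real) set" where
  "S_set = {s. (\<forall>i. 0 \<le> s i \<and> s i \<le> 1) \<and> s 0 = 1 \<and> (\<forall>i. s (Suc i) \<le> s i)}"

definition S_bar_inf :: "(nat \<Rightarrow> real) set" where
  "S_bar_inf = {s \<in> S_set. summable (\<lambda>i. s (Suc i))}"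

definition V_bar_inf :: "(nat \<Rightarrow> real) set" where
  "V_bar_inf = {v. \<exists>s \<in> S_bar_inf. \<forall>i. v i = (\<Sum>j. s (i + j))}"

definition g_fun :: "real \<Rightarrow> real \<Rightarrow> (nat \<Rightarrow> real) \<Rightarrow> nat \<Rightarrow> real" where
  "g_fun lam p v i =
     (if v i > 0 then p
      else if v (i - 1) > 0 then min (lam * v (i - 1)) p
      else 0)"

definition fluid_solution ::
  "real \<Rightarrow> real \<Rightarrow> (nat \<Rightarrow> real) \<Rightarrow> (real \<Rightarrow> nat \<Rightarrow> real) \<Rightarrow> bool" where
  "fluid_solution lam p v0 v \<longleftrightarrow>
     (\<forall>t\<ge>0. v t \<in> V_bar_inf)
   \<and> (\<exists>L. \<forall>i. \<forall>t\<ge>0. \<forall>u\<ge>0. \<bar>v t i - v u i\<bar> \<le> L * \<bar>t - u\<bar>)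
   \<and> v 0 = v0
   \<and> (\<forall>t\<ge>0. v t 0 - v t 1 = 1 \<and>
        (\<forall>i. 1 \<ge> v t i - v t (i+1) \<and> v t i - v t (i+1) \<ge> v t (i+1) - v t (i+2)
             \<and> v t (i+1) - v t (i+2) \<ge> 0))
   \<and> (\<exists>N \<in> null_sets lborel. \<forall>t\<ge>0. t \<notin> N \<longrightarrow>
        (\<forall>i\<ge>1. ((\<lambda>u. v u i) has_real_derivative
            (lam * (v t (i-1) - v t i) - (1 - p) * (v t i - v t (i+1)) - g_fun lam p (v t) i))
           (at t)))"

end

theory Submission
  imports Defs
begin

text \<open>Write s1, s2 for the increments of v1, v2. For fixed n consider the potential
  Phi_n = (sum of (s2 j - s1 j)^+ over j = 1..n) + v2 (n+1),
  which equals v2 (n+1) at time 0 by the initial ordering. It is Lipschitz in time, and at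
  almost every time its right derivative is at most lam * s1 n, which is at most v1 1 / n:
  after summation by parts the weights of the positive parts only change where the two
  profiles cross, and there the drift of the fluid equation has the right sign. A Lipschitz
  function whose right derivative is at most c almost everywhere grows at most like c t, so
  (s2 i - s1 i)^+ (t) <= Phi_n(t) <= v2 (n+1) (0) + C t / n for every n >= i, and the
  right-hand side tends to 0 as n grows.\<close>

lemma lipschitz_on_sum:
  fixes f :: "'i \<Rightarrow> 'a::metric_space \<Rightarrow> 'b::real_normed_vector"
  assumes "finite I" "\<And>i. i \<in> I \<Longrightarrow> (K i)-lipschitz_on U (f i)"
  shows "(\<Sum>i\<in>I. K i)-lipschitz_on U (\<lambda>x. \<Sum>i\<in>I. f i x)"
  using assms
proof (induction I rule: finite_induct)
  case empty
  show ?case by (simp add: lipschitz_on_constant)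
next
  case (insert i I)
  then show ?case by (simp add: lipschitz_on_add)
qed

lemma lipschitz_on_pos_part:
  fixes f :: "'a::metric_space \<Rightarrow> real"
  assumes "C-lipschitz_on U f"
  shows "C-lipschitz_on U (\<lambda>x. max (f x) 0)"
proof (rule lipschitz_onI)
  fix x y assume "x \<in> U" "y \<in> U"
  have "dist (max (f x) 0) (max (f y) 0) \<le> dist (f x) (f y)"
    by (auto simp: dist_real_def max_def)
  also have "\<dots> \<le> C * dist x y" using assms \<open>x \<in> U\<close> \<open>y \<in> U\<close> by (rule lipschitz_onD)
  finally show "dist (max (f x) 0) (max (f y) 0) \<le> C * dist x y" .
qed (rule lipschitz_on_nonneg[OF assms])

lemma negligible_lipschitz_image:
  fixes h :: "real \<Rightarrow> real"
  assumes "B-lipschitz_on S h" "negligible S"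
  shows "negligible (h ` S)"
proof (rule negligible_locally_Lipschitz_image[OF _ assms(2)])
  fix x assume "x \<in> S"
  then show "\<exists>T B. open T \<and> x \<in> T \<and> (\<forall>y\<in>S \<inter> T. norm (h y - h x) \<le> B * norm (y - x))"
    using assms(1) unfolding lipschitz_on_def dist_real_def
    by (intro exI[of _ UNIV] exI[of _ B]) auto
qed simp

text \<open>A value strictly between h a and h b is taken for the last time at a point \<tau> < b;
  since h exceeds it everywhere after \<tau>, \<tau> must lie in the exceptional set N.\<close>
lemma open_interval_subset_image_exceptional:
  fixes h :: "real \<Rightarrow> real"
  assumes "a \<le> b" "continuous_on {a..b} h"
    and drop: "\<And>t. t \<in> {a..<b} \<Longrightarrow> t \<notin> N \<Longrightarrow> \<exists>s\<in>{t<..b}. h s \<le> h t"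
  shows "{h a<..<h b} \<subseteq> h ` (N \<inter> {a..b})"
proof
  fix y assume y: "y \<in> {h a<..<h b}"
  define S where "S = {t\<in>{a..b}. h t = y}"
  have "S \<noteq> {}"
    using IVT'[of h a y b] y assms(1,2) unfolding S_def by auto
  moreover have "bdd_above S" unfolding S_def by (auto intro: bdd_aboveI[of _ b])
  moreover have "closed S"
    using continuous_closed_preimage[OF assms(2) closed_atLeastAtMost closed_singleton]
    unfolding S_def vimage_def by (simp add: Int_def conj_commute)
  ultimately have "Sup S \<in> S" by (rule closed_contains_Sup)
  define \<tau> where "\<tau> = Sup S"
  have last: "t \<le> \<tau>" if "t \<in> S" for t
    unfolding \<tau>_def using that \<open>bdd_above S\<close> by (rule cSup_upper)
  have \<tau>: "\<tau> \<in> {a..b}" "h \<tau> = y" using \<open>Sup S \<in> S\<close> unfolding \<tau>_def S_def by auto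
  have "\<tau> < b" using \<tau> y by (cases "\<tau> = b") auto
  have above: "y < h s" if s: "s \<in> {\<tau><..b}" for s
  proof (rule ccontr)
    assume "\<not> y < h s"
    moreover have "continuous_on {s..b} h"
      using assms(2) by (rule continuous_on_subset) (use \<tau> s in auto)
    ultimately obtain z where "s \<le> z" "z \<le> b" "h z = y"
      using IVT'[of h s y b] y s by auto
    with \<tau> s last[of z] show False unfolding S_def by auto
  qed
  have "\<tau> \<in> N"
  proof (rule ccontr)
    assume "\<tau> \<notin> N"
    with \<tau> \<open>\<tau> < b\<close> obtain s where "s \<in> {\<tau><..b}" "h s \<le> h \<tau>"
      using drop[of \<tau>] by auto
    with above \<tau> show False by fastforce
  qed
  with \<tau> show "y \<in> h ` (N \<inter> {a..b})" by auto
qed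

text \<open>Tilting g by (c + e) t makes the endpoint values increase while, off N, g can no longer
  exceed its current value immediately to the right; so a nondegenerate interval of values lies
  in the Lipschitz image of a null set.\<close>
lemma lipschitz_right_deriv_le_imp_le:
  fixes g :: "real \<Rightarrow> real"
  assumes "a \<le> b" "B-lipschitz_on {a..b} g" "N \<in> null_sets lborel"
    and deriv: "\<And>t. t \<in> {a..<b} \<Longrightarrow> t \<notin> N \<Longrightarrow>
      \<exists>D\<le>c. ((\<lambda>s. (g s - g t) / (s - t)) \<longlongrightarrow> D) (at_right t)"
  shows "g b \<le> g a + c * (b - a)"
proof (rule ccontr)
  let ?d = "g b - g a - c * (b - a)"
  assume "\<not> g b \<le> g a + c * (b - a)"
  then have "?d > 0" by simp
  with \<open>a \<le> b\<close> have "a < b" by (cases "a = b") auto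
  define e where "e = ?d / (2 * (b - a))"
  have "e > 0" using \<open>?d > 0\<close> \<open>a < b\<close> unfolding e_def by simp
  define h where "h t = g t - (c + e) * t" for t
  have "e * (b - a) = ?d / 2" using \<open>a < b\<close> unfolding e_def by (simp add: field_simps)
  then have "h b - h a = ?d / 2" unfolding h_def by (simp add: algebra_simps)
  with \<open>?d > 0\<close> have "h a < h b" by simp
  have lip: "(B + \<bar>c + e\<bar> * 1)-lipschitz_on {a..b} h"
    unfolding h_def by (intro lipschitz_on_diff assms(2) lipschitz_on_cmult_real lipschitz_on_id)
  have "\<exists>s\<in>{t<..b}. h s \<le> h t" if t: "t \<in> {a..<b}" "t \<notin> N" for t
  proof -
    obtain D where "D \<le> c" and D: "((\<lambda>s. (g s - g t) / (s - t)) \<longlongrightarrow> D) (at_right t)"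
      using deriv[OF t] by blast
    have "eventually (\<lambda>s. (g s - g t) / (s - t) < c + e \<and> t < s \<and> s < b) (at_right t)"
      using order_tendstoD(2)[OF D] \<open>D \<le> c\<close> \<open>e > 0\<close> t
        eventually_at_right_less[of t] eventually_at_right_real[of t b]
      by (auto intro: eventually_conj)
    then obtain s where s: "(g s - g t) / (s - t) < c + e" "t < s" "s < b"
      using eventually_happens trivial_limit_at_right_real by blast
    then have "h s \<le> h t" unfolding h_def by (simp add: pos_divide_less_eq algebra_simps)
    with s show ?thesis by auto
  qed
  then have "{h a<..<h b} \<subseteq> h ` (N \<inter> {a..b})"
    using open_interval_subset_image_exceptional[OF \<open>a \<le> b\<close> lipschitz_on_continuous_on[OF lip]]
    by blast
  moreover have "negligible (h ` (N \<inter> {a..b}))"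
  proof (rule negligible_lipschitz_image)
    show "negligible (N \<inter> {a..b})"
      using assms(3) null_sets_completionI negligible_iff_null_sets negligible_subset
      by (metis inf_le1)
    show "(B + \<bar>c + e\<bar> * 1)-lipschitz_on (N \<inter> {a..b}) h" using lip lipschitz_on_subset by blast
  qed
  ultimately have "negligible {h a<..<h b}" using negligible_subset by blast
  with \<open>h a < h b\<close> show False using negligible_interval(2)[of "h a" "h b"] by simp
qed

lemma has_real_derivative_right_quotient:
  assumes "(f has_real_derivative f') (at t)"
  shows "((\<lambda>s. (f s - f t) / (s - t)) \<longlongrightarrow> f') (at_right t)"
  using has_field_derivative_at_within[OF assms, of "{t<..}"] unfolding has_field_derivative_iff .

definition pos_part_rate :: "real \<Rightarrow> real \<Rightarrow> real" where
  "pos_part_rate x x' = (if x < 0 \<or> x = 0 \<and> x' \<le> 0 then 0 else x')"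

lemma pos_part_right_quotient:
  assumes "(f has_real_derivative f') (at t)"
  shows "((\<lambda>s. (max (f s) 0 - max (f t) 0) / (s - t)) \<longlongrightarrow> pos_part_rate (f t) f') (at_right t)"
proof -
  have q: "((\<lambda>s. (f s - f t) / (s - t)) \<longlongrightarrow> f') (at_right t)"
    using assms by (rule has_real_derivative_right_quotient)
  have f: "(f \<longlongrightarrow> f t) (at_right t)"
    using DERIV_isCont[OF assms] by (simp add: isCont_def filterlim_at_split)
  consider "f t > 0" | "f t < 0" | "f t = 0" by linarith
  then show ?thesis
  proof cases
    case 1
    have "eventually (\<lambda>s. f s > 0) (at_right t)" using order_tendstoD(1)[OF f 1] .
    then have "eventually (\<lambda>s. (f s - f t) / (s - t) = (max (f s) 0 - max (f t) 0) / (s - t))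
        (at_right t)"
      by eventually_elim (use 1 in auto)
    with q 1 show ?thesis unfolding pos_part_rate_def by (simp add: tendsto_cong)
  next
    case 2
    have "eventually (\<lambda>s. f s < 0) (at_right t)" using order_tendstoD(2)[OF f 2] .
    then have "eventually (\<lambda>s. (max (f s) 0 - max (f t) 0) / (s - t) = 0) (at_right t)"
      by eventually_elim (use 2 in auto)
    with 2 show ?thesis unfolding pos_part_rate_def by (simp add: tendsto_eventually)
  next
    case 3
    have "eventually (\<lambda>s. max ((f s - f t) / (s - t)) 0 = (max (f s) 0 - max (f t) 0) / (s - t))
        (at_right t)"
      using eventually_at_right_less[of t]
    proof eventually_elim
      case (elim s)
      then have "s - t > 0" by simp
      then show ?case using 3 by (auto simp: max_def divide_le_0_iff)
    qed
    moreover have "((\<lambda>s. max ((f s - f t) / (s - t)) 0) \<longlongrightarrow> max f' 0) (at_right t)"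
      by (intro tendsto_max q tendsto_const)
    ultimately show ?thesis using 3 unfolding pos_part_rate_def by (simp add: tendsto_cong max_def)
  qed
qed

definition increments :: "(nat \<Rightarrow> real) \<Rightarrow> nat \<Rightarrow> real" where
  "increments v i = v i - v (Suc i)"

text \<open>The right-hand side of the fluid equation for coordinate i \<ge> 1, written in terms of
  s = increments v; on V_bar_inf the test v i > 0 of g_fun is equivalent to s i > 0.\<close>
definition fluid_drift :: "real \<Rightarrow> real \<Rightarrow> (nat \<Rightarrow> real) \<Rightarrow> nat \<Rightarrow> real" where
  "fluid_drift lam p s i =
     lam * s (i - 1) - (1 - p) * s i - (if s i > 0 then p else min (lam * s (i - 1)) p)"

lemma fluid_drift_le:
  assumes "0 \<le> p" "p \<le> 1" "0 \<le> lam" "0 \<le> s i" "0 \<le> s (Suc i)"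
  shows "fluid_drift lam p s (Suc i) \<le> lam * s i"
proof -
  have "0 \<le> (1 - p) * s (Suc i)" "0 \<le> (if s (Suc i) > 0 then p else min (lam * s i) p)"
    using assms by simp_all
  then show ?thesis unfolding fluid_drift_def diff_Suc_1 by linarith
qed

lemma fluid_drift_crossing_le:
  assumes "0 \<le> lam" "p \<le> 1"
    and "s2 i \<le> s1 i" "s1 (Suc i) \<le> s2 (Suc i)"
    and "0 \<le> s1 (Suc i)" "s1 (Suc i) \<le> s1 i" "s2 (Suc i) \<le> s2 i"
  shows "fluid_drift lam p s2 (Suc i) \<le> fluid_drift lam p s1 (Suc i)"
proof (cases "s2 (Suc i) > 0")
  case True
  have "lam * s2 i \<le> lam * s1 i" "(1 - p) * s1 (Suc i) \<le> (1 - p) * s2 (Suc i)"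
    using assms by (simp_all add: mult_left_mono)
  with True show ?thesis unfolding fluid_drift_def by auto
next
  case False
  with assms have "s1 (Suc i) = 0" "s2 (Suc i) = 0" by auto
  moreover have "lam * s2 i \<le> lam * s1 i" using assms by (simp add: mult_left_mono)
  ultimately show ?thesis unfolding fluid_drift_def by (auto simp: min_def)
qed

lemma sum_weighted_differences_le:
  fixes a Y :: "nat \<Rightarrow> real"
  assumes "a 0 = 0" "\<And>i. i < n \<Longrightarrow> (a (Suc i) - a i) * Y (Suc i) \<le> 0"
  shows "(\<Sum>i=1..n. a i * (Y i - Y (Suc i))) \<le> - a n * Y (Suc n)"
  using assms(2)
proof (induction n)
  case 0
  then show ?case using assms(1) by simp
next
  case (Suc n)
  have "(\<Sum>i=1..Suc n. a i * (Y i - Y (Suc i)))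
      \<le> - a n * Y (Suc n) + a (Suc n) * (Y (Suc n) - Y (Suc (Suc n)))"
    using Suc by simp
  also have "\<dots> = (a (Suc n) - a n) * Y (Suc n) - a (Suc n) * Y (Suc (Suc n))"
    by (simp add: algebra_simps)
  also have "\<dots> \<le> - a (Suc n) * Y (Suc (Suc n))" using Suc.prems[of n] by simp
  finally show ?case .
qed

text \<open>Summation by parts with 0/1 weights marking where s2 exceeds s1 to first order: the
  weight changes only where the two profiles cross, and there the drifts are ordered.\<close>
lemma sum_pos_part_rate_le:
  assumes "0 \<le> lam" "0 \<le> p" "p \<le> 1" "s1 \<in> S_set" "s2 \<in> S_set"
  defines "Y \<equiv> \<lambda>j. fluid_drift lam p s2 j - fluid_drift lam p s1 j"
  shows "(\<Sum>j=1..n. pos_part_rate (s2 j - s1 j) (Y j - Y (Suc j))) + fluid_drift lam p s2 (Suc n)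
    \<le> lam * s1 n"
proof -
  have s: "s1 0 = s2 0" "0 \<le> s1 j" "0 \<le> s2 j" "s1 (Suc j) \<le> s1 j" "s2 (Suc j) \<le> s2 j" for j
    using assms(4,5) unfolding S_set_def by auto
  define a where "a j = (if j = 0 \<or> s2 j - s1 j < 0 \<or> s2 j - s1 j = 0 \<and> Y j - Y (Suc j) \<le> 0
    then 0 else 1 :: real)" for j
  have a_eq_0: "s2 j \<le> s1 j" if "a j = 0" for j
    using that s(1) unfolding a_def by (cases "j = 0") (auto split: if_splits)
  have a_eq_1: "s1 j \<le> s2 j" if "a j = 1" for j
    using that unfolding a_def by (auto split: if_splits)
  have a_cases: "a j = 0 \<or> a j = 1" for j unfolding a_def by auto
  have "(a (Suc i) - a i) * Y (Suc i) \<le> 0" for i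
  proof -
    consider "a (Suc i) = a i" | "a (Suc i) = 1" "a i = 0" | "a (Suc i) = 0" "a i = 1"
      using a_cases[of i] a_cases[of "Suc i"] by fastforce
    then show ?thesis
    proof cases
      case 2
      then have "fluid_drift lam p s2 (Suc i) \<le> fluid_drift lam p s1 (Suc i)"
        using a_eq_0 a_eq_1 s assms(1,3) by (intro fluid_drift_crossing_le) auto
      with 2 show ?thesis unfolding Y_def by simp
    next
      case 3
      then have "fluid_drift lam p s1 (Suc i) \<le> fluid_drift lam p s2 (Suc i)"
        using a_eq_0 a_eq_1 s assms(1,3) by (intro fluid_drift_crossing_le) auto
      with 3 show ?thesis unfolding Y_def by simp
    qed simp
  qed
  then have "(\<Sum>j=1..n. a j * (Y j - Y (Suc j))) \<le> - a n * Y (Suc n)"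
    by (intro sum_weighted_differences_le) (simp add: a_def)
  moreover have "(\<Sum>j=1..n. pos_part_rate (s2 j - s1 j) (Y j - Y (Suc j)))
      = (\<Sum>j=1..n. a j * (Y j - Y (Suc j)))"
    by (rule sum.cong) (auto simp: a_def pos_part_rate_def)
  moreover have "- a n * Y (Suc n) + fluid_drift lam p s2 (Suc n) \<le> lam * s1 n"
  proof (cases "a n = 0")
    case True
    have "lam * s2 n \<le> lam * s1 n" using a_eq_0[OF True] assms(1) by (rule mult_left_mono)
    with True show ?thesis using fluid_drift_le[of p lam s2 n] s assms(1-3) by simp
  next
    case False
    with a_cases have "a n = 1" by blast
    then show ?thesis using fluid_drift_le[of p lam s1 n] s assms(1-3) unfolding Y_def by simp
  qed
  ultimately show ?thesis by linarith
qed

lemma V_bar_inf_tail_sums: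
  assumes "v \<in> V_bar_inf"
  shows "increments v \<in> S_set" and "summable (increments v)"
    and "(\<lambda>j. increments v (j + i)) sums v i"
proof -
  obtain s where s: "s \<in> S_bar_inf" and v: "\<And>i. v i = (\<Sum>j. s (i + j))"
    using assms unfolding V_bar_inf_def by blast
  have "summable s" using s unfolding S_bar_inf_def by (simp add: summable_Suc_iff)
  then have sums: "(\<lambda>j. s (j + i)) sums v i" for i
    using summable_ignore_initial_segment[of s i] v[of i] by (simp add: summable_sums add.commute)
  have "increments v = s"
  proof
    fix i
    have "(\<lambda>j. s (Suc j + i)) sums v (Suc i)" using sums[of "Suc i"] by simp
    then have "(\<lambda>j. s (j + i)) sums (v (Suc i) + s i)"
      using sums_Suc_iff[of "\<lambda>j. s (j + i)"] by simp
    with sums[of i] have "v i = v (Suc i) + s i" by (rule sums_unique2)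
    then show "increments v i = s i" unfolding increments_def by simp
  qed
  with s \<open>summable s\<close> sums show "increments v \<in> S_set" "summable (increments v)"
    "(\<lambda>j. increments v (j + i)) sums v i"
    unfolding S_bar_inf_def by auto
qed

lemma V_bar_inf_nonneg:
  assumes "v \<in> V_bar_inf"
  shows "0 \<le> v i"
proof (rule sums_le[OF _ sums_zero V_bar_inf_tail_sums(3)[OF assms]])
  show "0 \<le> increments v (j + i)" for j
    using V_bar_inf_tail_sums(1)[OF assms] unfolding S_set_def by blast
qed

lemma V_bar_inf_pos_iff:
  assumes "v \<in> V_bar_inf"
  shows "0 < v i \<longleftrightarrow> 0 < increments v i"
proof
  assume "0 < increments v i"
  then show "0 < v i"
    using V_bar_inf_nonneg[OF assms, of "Suc i"] unfolding increments_def by simp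
next
  assume "0 < v i"
  show "0 < increments v i"
  proof (rule ccontr)
    let ?s = "increments v"
    assume "\<not> 0 < ?s i"
    have s: "0 \<le> ?s k" "?s (Suc k) \<le> ?s k" for k
      using V_bar_inf_tail_sums(1)[OF assms] unfolding S_set_def by auto
    have "?s (j + i) = 0" for j
    proof -
      have "?s (j + i) \<le> ?s i" using lift_Suc_antimono_le[of ?s i "j + i"] s(2) by simp
      with s(1)[of i] s(1)[of "j + i"] \<open>\<not> 0 < ?s i\<close> show ?thesis by linarith
    qed
    then have "v i = 0"
      using V_bar_inf_tail_sums(3)[OF assms, of i] by (simp add: sums_0 sums_unique2)
    with \<open>0 < v i\<close> show False by simp
  qed
qed

lemma V_bar_inf_tendsto_zero:
  assumes "v \<in> V_bar_inf"
  shows "v \<longlonglongrightarrow> 0"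
proof -
  let ?s = "increments v"
  have "v = (\<lambda>i. suminf ?s - (\<Sum>j<i. ?s j))"
  proof
    fix i
    show "v i = suminf ?s - (\<Sum>j<i. ?s j)"
      using V_bar_inf_tail_sums(2,3)[OF assms] sums_iff_shift[of ?s i "v i"]
      by (simp add: sums_iff)
  qed
  moreover have "(\<lambda>i. suminf ?s - (\<Sum>j<i. ?s j)) \<longlonglongrightarrow> suminf ?s - suminf ?s"
    by (intro tendsto_diff tendsto_const summable_LIMSEQ V_bar_inf_tail_sums(2)[OF assms])
  ultimately show ?thesis by simp
qed

lemma fluid_rhs_eq_fluid_drift:
  assumes "v \<in> V_bar_inf" "1 \<le> i" "0 \<le> p"
  shows "lam * (v (i - 1) - v i) - (1 - p) * (v i - v (i + 1)) - g_fun lam p v i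
    = fluid_drift lam p (increments v) i"
proof -
  have i: "Suc (i - 1) = i" using assms(2) by simp
  have "g_fun lam p v i = (if increments v i > 0 then p else min (lam * increments v (i - 1)) p)"
  proof (cases "0 < v i")
    case True
    then show ?thesis using V_bar_inf_pos_iff[OF assms(1)] unfolding g_fun_def by simp
  next
    case False
    then have "v i = 0" "\<not> 0 < increments v i"
      using V_bar_inf_nonneg[OF assms(1), of i] V_bar_inf_pos_iff[OF assms(1), of i] by simp_all
    moreover have "0 \<le> v (i - 1)" using V_bar_inf_nonneg[OF assms(1)] .
    ultimately show ?thesis
      using False assms(3) unfolding g_fun_def increments_def i by (simp add: min_def)
  qed
  then show ?thesis unfolding fluid_drift_def increments_def i by simp
qed

lemma fluid_solution_increments:
  assumes "fluid_solution lam p v0 v" "0 \<le> t"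
  shows "increments (v t) \<in> S_set"
proof -
  have "\<forall>t\<ge>0. v t 0 - v t 1 = 1 \<and>
        (\<forall>i. 1 \<ge> v t i - v t (i+1) \<and> v t i - v t (i+1) \<ge> v t (i+1) - v t (i+2)
             \<and> v t (i+1) - v t (i+2) \<ge> 0)"
    using assms(1) unfolding fluid_solution_def by blast
  then have s0: "increments (v t) 0 = 1"
    and le1: "\<And>i. increments (v t) i \<le> 1"
    and mono: "\<And>i. increments (v t) (Suc i) \<le> increments (v t) i"
    and pos: "\<And>i. 0 \<le> increments (v t) (Suc i)"
    using assms(2) unfolding increments_def numeral_2_eq_2 by simp_all
  have "0 \<le> increments (v t) i" for i using s0 pos by (cases i) auto
  with s0 le1 mono show ?thesis unfolding S_set_def by blast
qed

lemma fluid_solution_V_bar_inf: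
  assumes "fluid_solution lam p v0 v" "0 \<le> t"
  shows "v t \<in> V_bar_inf"
  using assms unfolding fluid_solution_def by blast

lemma fluid_solution_nonneg:
  assumes "fluid_solution lam p v0 v" "0 \<le> t"
  shows "0 \<le> v t i"
  using fluid_solution_V_bar_inf[OF assms] by (rule V_bar_inf_nonneg)

lemma fluid_solution_lipschitz:
  assumes "fluid_solution lam p v0 v"
  obtains L where "\<And>i. L-lipschitz_on {0..} (\<lambda>t. v t i)"
proof -
  have "\<exists>L. \<forall>i. \<forall>t\<ge>0. \<forall>u\<ge>0. \<bar>v t i - v u i\<bar> \<le> L * \<bar>t - u\<bar>"
    using assms unfolding fluid_solution_def by (elim conjE) assumption
  then obtain L where L: "\<forall>i. \<forall>t\<ge>0. \<forall>u\<ge>0. \<bar>v t i - v u i\<bar> \<le> L * \<bar>t - u\<bar>" ..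
  have "\<bar>L\<bar>-lipschitz_on {0..} (\<lambda>t. v t i)" for i
  proof (rule lipschitz_onI)
    fix t u :: real assume "t \<in> {0..}" "u \<in> {0..}"
    then have "\<bar>v t i - v u i\<bar> \<le> L * \<bar>t - u\<bar>" using L by simp
    also have "\<dots> \<le> \<bar>L\<bar> * \<bar>t - u\<bar>" by (simp add: mult_right_mono)
    finally show "dist (v t i) (v u i) \<le> \<bar>L\<bar> * dist t u" by (simp add: dist_real_def)
  qed simp
  then show ?thesis by (rule that)
qed

lemma fluid_solution_has_derivative:
  assumes "fluid_solution lam p v0 v" "0 \<le> p"
  obtains N where "N \<in> null_sets lborel"
    and "\<And>t i. 0 \<le> t \<Longrightarrow> t \<notin> N \<Longrightarrow> 1 \<le> i \<Longrightarrow>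
      ((\<lambda>u. v u i) has_real_derivative fluid_drift lam p (increments (v t)) i) (at t)"
proof -
  obtain N where N: "N \<in> null_sets lborel" and D: "\<forall>t\<ge>0. t \<notin> N \<longrightarrow>
        (\<forall>i\<ge>1. ((\<lambda>u. v u i) has_real_derivative
            (lam * (v t (i-1) - v t i) - (1 - p) * (v t i - v t (i+1)) - g_fun lam p (v t) i))
           (at t))"
    using assms(1) unfolding fluid_solution_def by blast
  show ?thesis
  proof (rule that[OF N])
    fix t :: real and i :: nat assume t: "0 \<le> t" "t \<notin> N" and i: "1 \<le> i"
    show "((\<lambda>u. v u i) has_real_derivative fluid_drift lam p (increments (v t)) i) (at t)"
      using D[rule_format, OF t i]
        fluid_rhs_eq_fluid_drift[OF fluid_solution_V_bar_inf[OF assms(1) t(1)] i assms(2), of lam]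
      by simp
  qed
qed

definition comparison_potential :: "nat \<Rightarrow> (nat \<Rightarrow> real) \<Rightarrow> (nat \<Rightarrow> real) \<Rightarrow> real" where
  "comparison_potential n w1 w2 =
     (\<Sum>j=1..n. max (increments w2 j - increments w1 j) 0) + w2 (Suc n)"

lemma comparison_potential_right_quotient:
  assumes "0 \<le> lam" "0 \<le> p" "p \<le> 1"
    and "increments (u1 t) \<in> S_set" "increments (u2 t) \<in> S_set"
    and "\<And>j. 1 \<le> j \<Longrightarrow>
      ((\<lambda>s. u1 s j) has_real_derivative fluid_drift lam p (increments (u1 t)) j) (at t)"
    and "\<And>j. 1 \<le> j \<Longrightarrow>
      ((\<lambda>s. u2 s j) has_real_derivative fluid_drift lam p (increments (u2 t)) j) (at t)"
  shows "\<exists>R\<le>lam * increments (u1 t) n.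
    ((\<lambda>s. (comparison_potential n (u1 s) (u2 s) - comparison_potential n (u1 t) (u2 t)) / (s - t))
      \<longlongrightarrow> R) (at_right t)"
proof -
  let ?s1 = "increments (u1 t)" and ?s2 = "increments (u2 t)"
  define Y where "Y j = fluid_drift lam p ?s2 j - fluid_drift lam p ?s1 j" for j
  define X where "X j s = (u2 s j - u2 s (Suc j)) - (u1 s j - u1 s (Suc j))" for j s
  have "((\<lambda>s. X j s) has_real_derivative Y j - Y (Suc j)) (at t)" if "1 \<le> j" for j
  proof -
    have "((\<lambda>s. X j s) has_real_derivative
        (fluid_drift lam p ?s2 j - fluid_drift lam p ?s2 (Suc j))
        - (fluid_drift lam p ?s1 j - fluid_drift lam p ?s1 (Suc j))) (at t)"
      unfolding X_def using that by (intro DERIV_diff assms(6,7)) auto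
    then show ?thesis unfolding Y_def by (simp add: algebra_simps)
  qed
  then have QX: "((\<lambda>s. (max (X j s) 0 - max (X j t) 0) / (s - t))
      \<longlongrightarrow> pos_part_rate (X j t) (Y j - Y (Suc j))) (at_right t)" if "j \<in> {1..n}" for j
    using that by (intro pos_part_right_quotient) auto
  then have "((\<lambda>s. (\<Sum>j=1..n. (max (X j s) 0 - max (X j t) 0) / (s - t))
      + (u2 s (Suc n) - u2 t (Suc n)) / (s - t))
      \<longlongrightarrow> (\<Sum>j=1..n. pos_part_rate (X j t) (Y j - Y (Suc j))) + fluid_drift lam p ?s2 (Suc n))
      (at_right t)"
    using QX has_real_derivative_right_quotient[OF assms(7)[of "Suc n"]]
    by (intro tendsto_add tendsto_sum) auto
  moreover have "(\<Sum>j=1..n. (max (X j s) 0 - max (X j t) 0) / (s - t))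
      + (u2 s (Suc n) - u2 t (Suc n)) / (s - t)
    = (comparison_potential n (u1 s) (u2 s) - comparison_potential n (u1 t) (u2 t)) / (s - t)" for s
    unfolding comparison_potential_def X_def increments_def
    by (simp add: sum_divide_distrib[symmetric] sum_subtractf diff_divide_distrib add_divide_distrib)
  moreover have "(\<Sum>j=1..n. pos_part_rate (X j t) (Y j - Y (Suc j))) + fluid_drift lam p ?s2 (Suc n)
      \<le> lam * ?s1 n"
    using sum_pos_part_rate_le[OF assms(1-5), of n] unfolding X_def Y_def increments_def by simp
  ultimately show ?thesis by auto
qed

lemma mult_increments_le:
  assumes "increments w \<in> S_set" "0 \<le> w (Suc n)"
  shows "real n * increments w n \<le> w 1"
proof -
  have "increments w n \<le> increments w j" if "j \<in> {1..n}" for j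
    using lift_Suc_antimono_le[of "increments w" j n] assms(1) that unfolding S_set_def by auto
  then have "real n * increments w n \<le> (\<Sum>j=1..n. increments w j)"
    using sum_mono[of "{1..n}" "\<lambda>_. increments w n"] by simp
  also have "\<dots> = w 1 - w (Suc n)" unfolding increments_def by (induction n) auto
  finally show ?thesis using assms(2) by simp
qed

lemma increments_gap_le_comparison_potential:
  assumes "1 \<le> i" "i \<le> n" "0 \<le> w2 (Suc n)"
  shows "increments w2 i - increments w1 i \<le> comparison_potential n w1 w2"
proof -
  have "increments w2 i - increments w1 i \<le> max (increments w2 i - increments w1 i) 0" by simp
  also have "\<dots> \<le> (\<Sum>j=1..n. max (increments w2 j - increments w1 j) 0)"
    using assms(1,2) by (intro member_le_sum) auto
  finally show ?thesis using assms(3) unfolding comparison_potential_def by simp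
qed

lemma comparison_potential_ordered:
  assumes "\<And>j. increments w2 j \<le> increments w1 j"
  shows "comparison_potential n w1 w2 = w2 (Suc n)"
  using assms unfolding comparison_potential_def by (simp add: max_absorb2)

lemma comparison_potential_growth:
  assumes "0 \<le> lam" "lam \<le> 1" "0 \<le> p" "p \<le> 1"
    and sol1: "fluid_solution lam p v01 v1" and sol2: "fluid_solution lam p v02 v2"
    and "1 \<le> n" "0 \<le> T" "\<And>t. t \<in> {0..T} \<Longrightarrow> v1 t 1 \<le> C"
  shows "comparison_potential n (v1 T) (v2 T) \<le> comparison_potential n (v1 0) (v2 0) + C / n * T"
proof -
  let ?P = "\<lambda>t. comparison_potential n (v1 t) (v2 t)"
  obtain L1 where L1: "\<And>j. L1-lipschitz_on {0..} (\<lambda>t. v1 t j)"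
    using fluid_solution_lipschitz[OF sol1] by blast
  obtain L2 where L2: "\<And>j. L2-lipschitz_on {0..} (\<lambda>t. v2 t j)"
    using fluid_solution_lipschitz[OF sol2] by blast
  have "((\<Sum>j=1..n. (L2 + L2) + (L1 + L1)) + L2)-lipschitz_on {0..} ?P"
    unfolding comparison_potential_def increments_def
    by (intro lipschitz_on_add lipschitz_on_sum lipschitz_on_pos_part lipschitz_on_diff L1 L2) simp
  then have lip: "((\<Sum>j=1..n. (L2 + L2) + (L1 + L1)) + L2)-lipschitz_on {0..T} ?P"
    by (rule lipschitz_on_subset) auto
  obtain N1 where N1: "N1 \<in> null_sets lborel"
    and D1: "\<And>t j. 0 \<le> t \<Longrightarrow> t \<notin> N1 \<Longrightarrow> 1 \<le> j \<Longrightarrow>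
      ((\<lambda>u. v1 u j) has_real_derivative fluid_drift lam p (increments (v1 t)) j) (at t)"
    using fluid_solution_has_derivative[OF sol1 assms(3)] by blast
  obtain N2 where N2: "N2 \<in> null_sets lborel"
    and D2: "\<And>t j. 0 \<le> t \<Longrightarrow> t \<notin> N2 \<Longrightarrow> 1 \<le> j \<Longrightarrow>
      ((\<lambda>u. v2 u j) has_real_derivative fluid_drift lam p (increments (v2 t)) j) (at t)"
    using fluid_solution_has_derivative[OF sol2 assms(3)] by blast
  have "?P T \<le> ?P 0 + C / n * (T - 0)"
  proof (rule lipschitz_right_deriv_le_imp_le[OF \<open>0 \<le> T\<close> lip null_sets.Un[OF N1 N2]])
    fix t assume t: "t \<in> {0..<T}" "t \<notin> N1 \<union> N2"
    let ?s1 = "increments (v1 t)"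
    have s1: "?s1 \<in> S_set" using fluid_solution_increments[OF sol1] t by simp
    obtain R where "R \<le> lam * ?s1 n"
      and R: "((\<lambda>s. (?P s - ?P t) / (s - t)) \<longlongrightarrow> R) (at_right t)"
      using comparison_potential_right_quotient[OF assms(1,3,4) s1
          fluid_solution_increments[OF sol2] D1 D2, of n] t by auto
    have "0 \<le> t" "t \<in> {0..T}" using t(1) by auto
    have "real n * ?s1 n \<le> v1 t 1"
      using mult_increments_le[OF s1 fluid_solution_nonneg[OF sol1 \<open>0 \<le> t\<close>]] .
    also have "\<dots> \<le> C" using assms(9)[OF \<open>t \<in> {0..T}\<close>] .
    finally have "real n * ?s1 n \<le> C" .
    moreover have "lam * ?s1 n \<le> ?s1 n"
      using mult_right_mono[OF \<open>lam \<le> 1\<close>, of "?s1 n"] s1 unfolding S_set_def by simp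
    ultimately have "R * n \<le> C"
      using \<open>R \<le> lam * ?s1 n\<close> mult_right_mono[of R "?s1 n" "real n"] by (simp add: mult.commute)
    then have "R \<le> C / n" using \<open>1 \<le> n\<close> by (simp add: field_simps)
    with R show "\<exists>D\<le>C / n. ((\<lambda>s. (?P s - ?P t) / (s - t)) \<longlongrightarrow> D) (at_right t)" by blast
  qed
  then show ?thesis by simp
qed

lemma fluid_comparison_gap_bound:
  assumes "0 \<le> lam" "lam \<le> 1" "0 \<le> p" "p \<le> 1"
    and sol1: "fluid_solution lam p v01 v1" and sol2: "fluid_solution lam p v02 v2"
    and init: "\<And>j. increments (v2 0) j \<le> increments (v1 0) j"
    and "0 \<le> T" and i: "1 \<le> i"
  obtains C where
    "\<And>n. i \<le> n \<Longrightarrow> increments (v2 T) i - increments (v1 T) i \<le> v2 0 (Suc n) + C / n * T"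
proof -
  obtain L where L: "\<And>j. L-lipschitz_on {0..} (\<lambda>t. v1 t j)"
    using fluid_solution_lipschitz[OF sol1] by blast
  have C: "v1 t 1 \<le> v1 0 1 + L * T" if "t \<in> {0..T}" for t
  proof -
    have "dist (v1 t 1) (v1 0 1) \<le> L * dist t 0" using L that by (intro lipschitz_onD) auto
    also have "\<dots> \<le> L * T"
      using that lipschitz_on_nonneg[OF L] by (simp add: dist_real_def mult_left_mono)
    finally show ?thesis by (simp add: dist_real_def)
  qed
  have "increments (v2 T) i - increments (v1 T) i \<le> v2 0 (Suc n) + (v1 0 1 + L * T) / n * T"
    if "i \<le> n" for n
  proof -
    have "increments (v2 T) i - increments (v1 T) i \<le> comparison_potential n (v1 T) (v2 T)"
      using that i fluid_solution_nonneg[OF sol2 \<open>0 \<le> T\<close>]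
      by (intro increments_gap_le_comparison_potential)
    also have "\<dots> \<le> comparison_potential n (v1 0) (v2 0) + (v1 0 1 + L * T) / n * T"
      using that i
      by (intro comparison_potential_growth[OF assms(1-4) sol1 sol2 _ \<open>0 \<le> T\<close> C]) auto
    finally show ?thesis unfolding comparison_potential_ordered[OF init] .
  qed
  then show ?thesis by (rule that)
qed

theorem lemma3:
  fixes lam p :: real and v1 v2 :: "real \<Rightarrow> nat \<Rightarrow> real" and v01 v02 :: "nat \<Rightarrow> real"
  assumes "0 \<le> lam" "lam < 1" "0 \<le> p" "p \<le> 1"
    and "v01 \<in> V_bar_inf" "v02 \<in> V_bar_inf"
    and "fluid_solution lam p v01 v1" "fluid_solution lam p v02 v2"
    and "\<forall>i. v1 0 i - v1 0 (i+1) \<ge> v2 0 i - v2 0 (i+1)"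
  shows "\<forall>t\<ge>0. \<forall>i. v1 t i - v1 t (i+1) \<ge> v2 t i - v2 t (i+1)"
proof (intro allI impI)
  fix T :: real and i :: nat
  assume "0 \<le> T"
  have params: "0 \<le> lam" "lam \<le> 1" "0 \<le> p" "p \<le> 1" using assms(1-4) by simp_all
  have init: "\<And>j. increments (v2 0) j \<le> increments (v1 0) j"
    using assms(9) unfolding increments_def by simp
  have "increments (v2 T) i \<le> increments (v1 T) i"
  proof (cases "i = 0")
    case True
    then show ?thesis using fluid_solution_increments[OF assms(7) \<open>0 \<le> T\<close>]
        fluid_solution_increments[OF assms(8) \<open>0 \<le> T\<close>] unfolding S_set_def by simp
  next
    case False
    then have "1 \<le> i" by simp
    then obtain C where C: "\<And>n. i \<le> n \<Longrightarrow>
        increments (v2 T) i - increments (v1 T) i \<le> v2 0 (Suc n) + C / n * T"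
      using fluid_comparison_gap_bound[OF params assms(7,8) init \<open>0 \<le> T\<close>] by blast
    have "(\<lambda>n. v2 0 (Suc n) + C / n * T) \<longlonglongrightarrow> 0 + 0 * T"
      using V_bar_inf_tendsto_zero[OF fluid_solution_V_bar_inf[OF assms(8), of 0]]
      by (intro tendsto_intros LIMSEQ_Suc lim_const_over_n) auto
    then have "increments (v2 T) i - increments (v1 T) i \<le> 0"
      using C by (intro LIMSEQ_le_const) auto
    then show ?thesis by simp
  qed
  then show "v2 T i - v2 T (i + 1) \<le> v1 T i - v1 T (i + 1)" unfolding increments_def by simp
qed

end
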